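(* For every $\sigma\in\mathrm{Aut}(M_7)$, the action of $\sigma$ commutes with the action of $\Lambda_{\{2\},\{3\}}$, i.e. $\Lambda_{\{2\},\{3\}}\circ\sigma=\sigma\circ\Lambda_{\{2\},\{3\}}$ (in particular $\lambda_{\{2\},\{3\}}\circ\sigma=\sigma\circ\lambda_{\{2\},\{3\}}$ as rational self-maps of $\mathcal{R}_7$).
   Context: Over $\mathbb{C}$. For a line arrangement $\mathcal{C}$, $\Lambda_{\{2\},\{3\}}(\mathcal{C})$ is the union of lines containing exactly three double points of $\mathcal{C}$. For a labeled arrangement $\mathcal{C}_0=(\ell_1,\dots,\ell_7)$ let $H_j=\sum_{k\neq j}\ell_k$; the labeled image is $\Lambda_{\{2\},\{3\}}(\mathcal{C}_0)=(\Lambda_{\{2\},\{3\}}(H_1),\dots,\Lambda_{\{2\},\{3\}}(H_7))$. $M_7$ is the rank-3 matroid on $\{1,\dots,7,1',\dots,7'\}$ whose non-bases are the triples $\{a,b,c'\}$ with $a\neq b\in\{1,\dots,7\}$, $a+b\equiv2c\pmod7$; its realizations are labeled 14-line arrangements in which three lines are concurrent iff their labels form a non-basis, and for a realization $\mathcal{C}_0\cup\mathcal{C}_1$ one has $\mathcal{C}_1=\Lambda_{\{2\},\{3\}}(\mathcal{C}_0)$ (labeled). $\mathcal{R}_7$ is the moduli space of realizations up to $\mathrm{PGL}_3$; for generic realizations $\mathcal{C}_1\cup\Lambda_{\{2\},\{3\}}(\mathcal{C}_1)$ is again a realization, and $\lambda_{\{2\},\{3\}}:[\mathcal{C}_0\cup\mathcal{C}_1]\mapsto[\mathcal{C}_1\cup\Lambda_{\{2\},\{3\}}(\mathcal{C}_1)]$.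 $\mathrm{Aut}(M_7)$ is the group of permutations of the ground set preserving bases; each $\sigma$ preserves $\{1,\dots,7\}$ and acts on labeled arrangements (and on $\mathcal{R}_7$) by permuting labels. *)

theory Defs
  imports "HOL-Analysis.Analysis"
begin

type_synonym vec3 = "complex ^ 3"

definition proj_point :: "vec3 \<Rightarrow> vec3 set" where
  "proj_point v = {c *s v | c. c \<noteq> 0}"

definition P2 :: "vec3 set set" where
  "P2 = proj_point ` (UNIV - {0})"

definition line_of :: "vec3 \<Rightarrow> vec3 set set" where
  "line_of l = {P \<in> P2. \<forall>v\<in>P. (\<Sum>i\<in>UNIV. l $ i * v $ i) = 0}"

definition proj_lines :: "vec3 set set set" where
  "proj_lines = line_of ` (UNIV - {0})"

definition double_points :: "vec3 set set set \<Rightarrow> vec3 set set" where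
  "double_points A = {P \<in> P2. card {L \<in> A. P \<in> L} = 2}"

definition Lambda23 :: "vec3 set set set \<Rightarrow> vec3 set set" where
  "Lambda23 A = \<Union> {L \<in> proj_lines. card (L \<inter> double_points A) = 3}"

definition labeled_arrangement7 :: "(nat \<Rightarrow> vec3 set set) \<Rightarrow> bool" where
  "labeled_arrangement7 C \<longleftrightarrow> (\<forall>i\<in>{1..7}. C i \<in> proj_lines) \<and> inj_on C {1..7}"

definition H_arr :: "(nat \<Rightarrow> vec3 set set) \<Rightarrow> nat \<Rightarrow> vec3 set set set" where
  "H_arr C j = C ` ({1..7} - {j})"

definition Lambda23_lab :: "(nat \<Rightarrow> vec3 set set) \<Rightarrow> nat \<Rightarrow> vec3 set set" where
  "Lambda23_lab C j = Lambda23 (H_arr C j)"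

text \<open>Ground set: (i, False) stands for label i, (i, True) for label i', i in {1..7}.\<close>
definition M7_ground :: "(nat \<times> bool) set" where
  "M7_ground = {1..7} \<times> UNIV"

definition M7_nonbasis :: "(nat \<times> bool) set \<Rightarrow> bool" where
  "M7_nonbasis T \<longleftrightarrow> (\<exists>a b c. a \<in> {1..7} \<and> b \<in> {1..7} \<and> c \<in> {1..7} \<and> a \<noteq> b \<and>
      (a + b) mod 7 = (2 * c) mod 7 \<and> T = {(a, False), (b, False), (c, True)})"

definition M7_bases :: "(nat \<times> bool) set set" where
  "M7_bases = {T. T \<subseteq> M7_ground \<and> card T = 3 \<and> \<not> M7_nonbasis T}"

definition Aut_M7 :: "((nat \<times> bool) \<Rightarrow> (nat \<times> bool)) set" where
  "Aut_M7 = {\<sigma>. bij_betw \<sigma> M7_ground M7_ground \<and>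
      (\<forall>T. T \<subseteq> M7_ground \<longrightarrow> (T \<in> M7_bases \<longleftrightarrow> \<sigma> ` T \<in> M7_bases))}"

text \<open>Action of sigma on a 7-tuple labeled by the unprimed labels (b = False) or by the
primed labels (b = True), by relabeling: the object with label x gets label sigma(x),
i.e. (sigma . D)(y) = D(sigma^{-1}(y)).  (Every automorphism preserves {1..7}.)\<close>
definition act_lab :: "((nat \<times> bool) \<Rightarrow> (nat \<times> bool)) \<Rightarrow> bool \<Rightarrow> (nat \<Rightarrow> 'a) \<Rightarrow> nat \<Rightarrow> 'a" where
  "act_lab \<sigma> b D i = D (fst (inv_into M7_ground \<sigma> (i, b)))"

end

(* An automorphism of M_7 preserves the graph in which two elements of the ground set are
   adjacent when they lie in a common non-basis. Two elements are adjacent iff their labels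
   differ and they are not both primed, so the primed elements are exactly those with two
   distinct non-neighbours other than themselves; hence sigma maps primed to primed labels.
   As c is not adjacent to c', sigma permutes both halves by the same permutation pi of
   {1..7}. Relabeling by pi then turns H_j into H_(pi^-1 j), so both sides are Lambda23 of
   the same arrangement. *)

theory Submission
  imports Defs
begin

definition M7_adjacent :: "nat \<times> bool \<Rightarrow> nat \<times> bool \<Rightarrow> bool" where
  "M7_adjacent x y \<longleftrightarrow> (\<exists>T. M7_nonbasis T \<and> x \<in> T \<and> y \<in> T \<and> x \<noteq> y)"

lemma M7_ground_iff: "(i, b) \<in> M7_ground \<longleftrightarrow> i \<in> {1..7}"
  by (simp add: M7_ground_def)

lemma atLeastAtMost_1_7_iff:
  "(a::nat) \<in> {1..7} \<longleftrightarrow> a = 1 \<or> a = 2 \<or> a = 3 \<or> a = 4 \<or> a = 5 \<or> a = 6 \<or> a = 7"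
  by auto

lemma exists_half_mod_7:
  "a \<in> {1..7} \<Longrightarrow> b \<in> {1..7} \<Longrightarrow> \<exists>c\<in>{1..7::nat}. (a + b) mod 7 = (2 * c) mod 7"
  unfolding atLeastAtMost_1_7_iff by (elim disjE; simp; presburger)

lemma exists_reflection_mod_7:
  "a \<in> {1..7} \<Longrightarrow> c \<in> {1..7} \<Longrightarrow> a \<noteq> c \<Longrightarrow>
    \<exists>b\<in>{1..7::nat}. b \<noteq> a \<and> (a + b) mod 7 = (2 * c) mod 7"
  unfolding atLeastAtMost_1_7_iff by (elim disjE; simp; presburger)

lemma M7_nonbasis_distinct_labels:
  fixes a b c :: nat
  assumes "a \<in> {1..7}" "b \<in> {1..7}" "c \<in> {1..7}" "a \<noteq> b" "(a + b) mod 7 = (2 * c) mod 7"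
  shows "c \<noteq> a" "c \<noteq> b"
  using assms unfolding atLeastAtMost_1_7_iff by auto

lemma M7_adjacent_commute: "M7_adjacent x y \<longleftrightarrow> M7_adjacent y x"
  unfolding M7_adjacent_def by blast

lemma M7_adjacent_iff:
  assumes "x \<in> M7_ground" "y \<in> M7_ground"
  shows "M7_adjacent x y \<longleftrightarrow> fst x \<noteq> fst y \<and> \<not> (snd x \<and> snd y)"
proof
  assume "M7_adjacent x y"
  then obtain a b c where abc: "a \<in> {1..7}" "b \<in> {1..7}" "c \<in> {1..7}" "a \<noteq> b"
      "(a + b) mod 7 = (2 * c) mod 7" "x \<in> {(a, False), (b, False), (c, True)}"
      "y \<in> {(a, False), (b, False), (c, True)}" "x \<noteq> y"
    unfolding M7_adjacent_def M7_nonbasis_def by blast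
  moreover have "c \<noteq> a" "c \<noteq> b"
    using M7_nonbasis_distinct_labels[OF abc(1-5)] by auto
  ultimately show "fst x \<noteq> fst y \<and> \<not> (snd x \<and> snd y)"
    by auto
next
  assume xy: "fst x \<noteq> fst y \<and> \<not> (snd x \<and> snd y)"
  obtain a p b q where x: "x = (a, p)" "a \<in> {1..7}" and y: "y = (b, q)" "b \<in> {1..7}"
    using assms by (cases x, cases y) (auto simp: M7_ground_iff)
  have nonbasis: "M7_nonbasis {(a, False), (b, False), (c, True)}"
    if "a \<in> {1..7}" "b \<in> {1..7}" "c \<in> {1..7}" "a \<noteq> b" "(a + b) mod 7 = (2 * c) mod 7" for a b c
    unfolding M7_nonbasis_def using that by blast
  have adjacent_unprimed: "M7_adjacent (a, False) (b, False)" if ab: "a \<noteq> b" "a \<in> {1..7}" "b \<in> {1..7}" for a b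
  proof -
    obtain c where "c \<in> {1..7}" "(a + b) mod 7 = (2 * c) mod 7"
      using exists_half_mod_7[OF ab(2,3)] by blast
    with nonbasis[of a b c] ab show ?thesis
      unfolding M7_adjacent_def by blast
  qed
  have adjacent_mixed: "M7_adjacent (a, False) (c, True)" if ac: "a \<noteq> c" "a \<in> {1..7}" "c \<in> {1..7}" for a c
  proof -
    obtain b where "b \<in> {1..7}" "b \<noteq> a" "(a + b) mod 7 = (2 * c) mod 7"
      using exists_reflection_mod_7[OF ac(2,3,1)] by blast
    with nonbasis[of a b c] ac show ?thesis
      unfolding M7_adjacent_def by blast
  qed
  show "M7_adjacent x y"
  proof (cases p)
    case False
    then show ?thesis
      using xy x y adjacent_unprimed adjacent_mixed by (cases q) auto
  next
    case True
    then have "\<not> q" "a \<noteq> b"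
      using xy x y by simp_all
    then show ?thesis
      using x y True adjacent_mixed[of b a] by (simp add: M7_adjacent_commute[of "(a, True)"])
  qed
qed

lemma M7_primed_iff_two_non_neighbours:
  assumes "x \<in> M7_ground"
  shows "snd x \<longleftrightarrow> (\<exists>y\<in>M7_ground. \<exists>z\<in>M7_ground.
    x \<noteq> y \<and> x \<noteq> z \<and> y \<noteq> z \<and> \<not> M7_adjacent x y \<and> \<not> M7_adjacent x z)"
proof -
  obtain c p where x: "x = (c, p)" "c \<in> {1..7}"
    using assms by (cases x) (auto simp: M7_ground_iff)
  show ?thesis
  proof (cases p)
    case True
    define c' where "c' = (if c = 1 then 2 else 1 :: nat)"
    have "(c, False) \<in> M7_ground" "(c', True) \<in> M7_ground" "c' \<noteq> c"
      using x(2) by (auto simp: M7_ground_iff c'_def)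
    moreover have "\<not> M7_adjacent x (c, False)" "\<not> M7_adjacent x (c', True)"
      using calculation assms x True by (simp_all add: M7_adjacent_iff)
    ultimately have "\<exists>y\<in>M7_ground. \<exists>z\<in>M7_ground.
        x \<noteq> y \<and> x \<noteq> z \<and> y \<noteq> z \<and> \<not> M7_adjacent x y \<and> \<not> M7_adjacent x z"
      using x True by (intro bexI[of _ "(c, False)"] bexI[of _ "(c', True)"]) auto
    then show ?thesis
      using x True by simp
  next
    case False
    have "y = (c, True)" if "y \<in> M7_ground" "x \<noteq> y" "\<not> M7_adjacent x y" for y
      using that x False assms by (cases y) (auto simp: M7_adjacent_iff)
    then show ?thesis
      using x False by (metis snd_conv)
  qed
qed

lemma M7_nonbasis_iff:
  assumes "T \<subseteq> M7_ground"
  shows "M7_nonbasis T \<longleftrightarrow> card T = 3 \<and> T \<notin> M7_bases"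
proof -
  have "card T = 3" if "M7_nonbasis T"
    using that unfolding M7_nonbasis_def by auto
  then show ?thesis
    using assms unfolding M7_bases_def by auto
qed

lemma Aut_M7_bij: "\<sigma> \<in> Aut_M7 \<Longrightarrow> bij_betw \<sigma> M7_ground M7_ground"
  by (simp add: Aut_M7_def)

lemma Aut_M7_nonbasis_image_iff:
  assumes "\<sigma> \<in> Aut_M7" "T \<subseteq> M7_ground"
  shows "M7_nonbasis (\<sigma> ` T) \<longleftrightarrow> M7_nonbasis T"
proof -
  have bij: "bij_betw \<sigma> M7_ground M7_ground"
    using assms(1) by (rule Aut_M7_bij)
  then have "\<sigma> ` T \<subseteq> M7_ground" "card (\<sigma> ` T) = card T"
    using assms(2) by (auto simp: bij_betw_def card_image inj_on_subset)
  moreover have "\<sigma> ` T \<in> M7_bases \<longleftrightarrow> T \<in> M7_bases"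
    using assms unfolding Aut_M7_def by blast
  ultimately show ?thesis
    using assms(2) by (simp add: M7_nonbasis_iff)
qed

lemma Aut_M7_adjacent_iff:
  assumes \<sigma>: "\<sigma> \<in> Aut_M7" and xy: "x \<in> M7_ground" "y \<in> M7_ground"
  shows "M7_adjacent (\<sigma> x) (\<sigma> y) \<longleftrightarrow> M7_adjacent x y"
proof -
  have bij: "bij_betw \<sigma> M7_ground M7_ground"
    using \<sigma> by (rule Aut_M7_bij)
  have nonbasis_sub: "M7_nonbasis T \<Longrightarrow> T \<subseteq> M7_ground" for T
    unfolding M7_nonbasis_def M7_ground_def by auto
  have "M7_adjacent (\<sigma> x) (\<sigma> y) \<longleftrightarrow>
      (\<exists>T\<subseteq>M7_ground. M7_nonbasis (\<sigma> ` T) \<and> \<sigma> x \<in> \<sigma> ` T \<and> \<sigma> y \<in> \<sigma> ` T \<and> \<sigma> x \<noteq> \<sigma> y)"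
    unfolding M7_adjacent_def
    using nonbasis_sub bij by (metis bij_betw_def subset_image_iff)
  also have "\<dots> \<longleftrightarrow> (\<exists>T\<subseteq>M7_ground. M7_nonbasis T \<and> x \<in> T \<and> y \<in> T \<and> x \<noteq> y)"
    using Aut_M7_nonbasis_image_iff[OF \<sigma>] bij xy
    by (metis bij_betw_def inj_on_image_mem_iff inj_on_contraD)
  also have "\<dots> \<longleftrightarrow> M7_adjacent x y"
    unfolding M7_adjacent_def using nonbasis_sub by blast
  finally show ?thesis .
qed

lemma Aut_M7_preserves_primed:
  assumes \<sigma>: "\<sigma> \<in> Aut_M7" and x: "x \<in> M7_ground"
  shows "snd (\<sigma> x) \<longleftrightarrow> snd x"
proof -
  have bij: "bij_betw \<sigma> M7_ground M7_ground"
    using \<sigma> by (rule Aut_M7_bij)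
  then have \<sigma>x: "\<sigma> x \<in> M7_ground"
    using x by (rule bij_betw_apply)
  have reindex: "(\<exists>y\<in>M7_ground. \<exists>z\<in>M7_ground. R y z) \<longleftrightarrow>
      (\<exists>y\<in>M7_ground. \<exists>z\<in>M7_ground. R (\<sigma> y) (\<sigma> z))" for R
    using bij_betw_imp_surj_on[OF bij] by (metis image_iff)
  have inj_iff: "y \<in> M7_ground \<Longrightarrow> z \<in> M7_ground \<Longrightarrow> \<sigma> y = \<sigma> z \<longleftrightarrow> y = z" for y z
    using bij_betw_imp_inj_on[OF bij] by (rule inj_on_eq_iff)
  have "snd (\<sigma> x) \<longleftrightarrow> (\<exists>y\<in>M7_ground. \<exists>z\<in>M7_ground. \<sigma> x \<noteq> \<sigma> y \<and> \<sigma> x \<noteq> \<sigma> z \<and>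
      \<sigma> y \<noteq> \<sigma> z \<and> \<not> M7_adjacent (\<sigma> x) (\<sigma> y) \<and> \<not> M7_adjacent (\<sigma> x) (\<sigma> z))"
    unfolding M7_primed_iff_two_non_neighbours[OF \<sigma>x] by (rule reindex)
  also have "\<dots> \<longleftrightarrow> (\<exists>y\<in>M7_ground. \<exists>z\<in>M7_ground. x \<noteq> y \<and> x \<noteq> z \<and> y \<noteq> z \<and>
      \<not> M7_adjacent x y \<and> \<not> M7_adjacent x z)"
    by (intro bex_cong refl) (simp add: x inj_iff Aut_M7_adjacent_iff[OF \<sigma> x])
  also have "\<dots> \<longleftrightarrow> snd x"
    by (rule M7_primed_iff_two_non_neighbours[OF x, symmetric])
  finally show ?thesis .
qed

lemma Aut_M7_label_permutation:
  assumes \<sigma>: "\<sigma> \<in> Aut_M7"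
  obtains \<pi> where "bij_betw \<pi> {1..7} {1..7}" "\<And>i b. i \<in> {1..7} \<Longrightarrow> \<sigma> (i, b) = (\<pi> i, b)"
proof -
  define \<pi> where "\<pi> i = fst (\<sigma> (i, False))" for i
  have bij: "bij_betw \<sigma> M7_ground M7_ground"
    using \<sigma> by (rule Aut_M7_bij)
  have in_ground: "i \<in> {1..7} \<Longrightarrow> (i, b) \<in> M7_ground" for i b
    by (simp add: M7_ground_iff)
  have \<sigma>_in_ground: "i \<in> {1..7} \<Longrightarrow> \<sigma> (i, b) \<in> M7_ground" for i b
    using bij_betw_apply[OF bij in_ground] .
  have unprimed: "\<sigma> (i, False) = (\<pi> i, False)" if "i \<in> {1..7}" for i
    using Aut_M7_preserves_primed[OF \<sigma> in_ground[OF that]] by (simp add: \<pi>_def prod_eq_iff)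
  have primed: "\<sigma> (i, True) = (\<pi> i, True)" if i: "i \<in> {1..7}" for i
  proof -
    define k where "k = fst (\<sigma> (i, True))"
    have k: "\<sigma> (i, True) = (k, True)"
      using Aut_M7_preserves_primed[OF \<sigma> in_ground[OF i]] by (simp add: k_def prod_eq_iff)
    have "\<not> M7_adjacent (i, False) (i, True)"
      using M7_adjacent_iff[OF in_ground[OF i] in_ground[OF i]] by simp
    then have "\<not> M7_adjacent (\<pi> i, False) (k, True)"
      using Aut_M7_adjacent_iff[OF \<sigma> in_ground[OF i] in_ground[OF i]] unprimed[OF i] k by metis
    then show ?thesis
      using M7_adjacent_iff[OF \<sigma>_in_ground[OF i] \<sigma>_in_ground[OF i]] unprimed[OF i] k by (metis fst_conv snd_conv)
  qed
  have "\<pi> ` {1..7} \<subseteq> {1..7}"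
    by (rule image_subsetI) (metis M7_ground_iff \<sigma>_in_ground unprimed)
  moreover have "inj_on \<pi> {1..7}"
  proof (rule inj_onI)
    fix i i' assume "i \<in> {1..7}" "i' \<in> {1..7}" "\<pi> i = \<pi> i'"
    then have "\<sigma> (i, False) = \<sigma> (i', False)"
      by (simp add: unprimed)
    then show "i = i'"
      using bij_betw_imp_inj_on[OF bij] \<open>i \<in> {1..7}\<close> \<open>i' \<in> {1..7}\<close>
      by (auto simp: inj_on_eq_iff in_ground)
  qed
  ultimately have "bij_betw \<pi> {1..7} {1..7}"
    by (simp add: bij_betw_def endo_inj_surj)
  moreover have "\<sigma> (i, b) = (\<pi> i, b)" if "i \<in> {1..7}" for i b
    using unprimed primed that by (cases b) auto
  ultimately show ?thesis
    using that by blast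
qed

lemma act_lab_label_permutation:
  assumes \<pi>: "bij_betw \<pi> {1..7} {1..7}" and \<sigma>: "\<And>i b. i \<in> {1..7} \<Longrightarrow> \<sigma> (i, b) = (\<pi> i, b)"
    and i: "i \<in> {1..7}"
  shows "act_lab \<sigma> b D i = D (inv_into {1..7} \<pi> i)"
proof -
  define k where "k = inv_into {1..7} \<pi> i"
  have k: "k \<in> {1..7}" "\<pi> k = i"
    unfolding k_def using i bij_betw_imp_surj_on[OF \<pi>] by (metis inv_into_into, metis f_inv_into_f)
  have "inj_on \<sigma> M7_ground"
    using bij_betw_imp_inj_on[OF \<pi>] by (auto simp: inj_on_def M7_ground_def \<sigma>)
  then have "inv_into M7_ground \<sigma> (i, b) = (k, b)"
    using k by (intro inv_into_f_eq) (auto simp: M7_ground_iff \<sigma>)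
  then show ?thesis
    by (simp add: act_lab_def k_def)
qed

lemma H_arr_relabel:
  assumes \<rho>: "bij_betw \<rho> {1..7} {1..7}" and j: "j \<in> {1..7}"
    and D: "\<And>i. i \<in> {1..7} \<Longrightarrow> D i = C (\<rho> i)"
  shows "H_arr D j = H_arr C (\<rho> j)"
proof -
  have "bij_betw \<rho> ({1..7} - {j}) ({1..7} - {\<rho> j})"
    using \<rho> j by (intro bij_betw_DiffI) (auto simp: bij_betw_def)
  then have "\<rho> ` ({1..7} - {j}) = {1..7} - {\<rho> j}"
    by (rule bij_betw_imp_surj_on)
  moreover have "D ` ({1..7} - {j}) = C ` \<rho> ` ({1..7} - {j})"
    using D by (auto simp: image_image)
  ultimately show ?thesis
    by (simp add: H_arr_def)
qed

theorem proposition3p6: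
  fixes \<sigma> :: "nat \<times> bool \<Rightarrow> nat \<times> bool" and C :: "nat \<Rightarrow> vec3 set set"
  assumes "\<sigma> \<in> Aut_M7" and "labeled_arrangement7 C"
  shows "\<forall>j\<in>{1..7}. Lambda23_lab (act_lab \<sigma> False C) j = act_lab \<sigma> True (Lambda23_lab C) j"
proof
  fix j :: nat assume j: "j \<in> {1..7}"
  obtain \<pi> where \<pi>: "bij_betw \<pi> {1..7} {1..7}" and \<sigma>: "\<And>i b. i \<in> {1..7} \<Longrightarrow> \<sigma> (i, b) = (\<pi> i, b)"
    using Aut_M7_label_permutation[OF assms(1)] by blast
  define \<rho> where "\<rho> = inv_into {1..7} \<pi>"
  have \<rho>: "bij_betw \<rho> {1..7} {1..7}"
    unfolding \<rho>_def using \<pi> by (rule bij_betw_inv_into)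
  have "H_arr (act_lab \<sigma> False C) j = H_arr C (\<rho> j)"
    using \<rho> j act_lab_label_permutation[OF \<pi> \<sigma>] unfolding \<rho>_def by (rule H_arr_relabel)
  then have "Lambda23_lab (act_lab \<sigma> False C) j = Lambda23_lab C (\<rho> j)"
    by (simp add: Lambda23_lab_def)
  also have "\<dots> = act_lab \<sigma> True (Lambda23_lab C) j"
    by (simp only: \<rho>_def act_lab_label_permutation[OF \<pi> \<sigma> j])
  finally show "Lambda23_lab (act_lab \<sigma> False C) j = act_lab \<sigma> True (Lambda23_lab C) j" .
qed

end
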